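(* Let $A$ be an associative (not necessarily unital) algebra over a field satisfying the identity $x_1\cdots x_n=x_{\sigma(1)}\cdots x_{\sigma(n)}$, where $\sigma\in S_n$ satisfies $\sigma(1)\ne1$ and $\sigma(n)\ne n$. Then $H_{n+2}$ contains $S(n+2;4,4)$.
   Context: For each $k$, $H_k\subseteq S_k$ is the set of permutations $\tau$ such that $A$ satisfies $x_1\cdots x_k=x_{\tau(1)}\cdots x_{\tau(k)}$ (i.e. $a_1\cdots a_k=a_{\tau(1)}\cdots a_{\tau(k)}$ for all $a_1,\dots,a_k\in A$). For $m\ge a,b$, $S(m;a,b)$ denotes the subgroup of $S_m$ generated by all permutations of the first $a$ letters $\{1,\dots,a\}$ and all permutations of the last $b$ letters $\{m-b+1,\dots,m\}$. *)

theory Defs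
  imports "HOL-Combinatorics.Permutations" "HOL.Vector_Spaces"
begin

fun lprod :: "('a::semigroup_mult) list \<Rightarrow> 'a" where
  "lprod [] = undefined"
| "lprod [x] = x"
| "lprod (x # y # xs) = x * lprod (y # xs)"

definition satisfies_perm_id :: "'a::semigroup_mult itself \<Rightarrow> nat \<Rightarrow> (nat \<Rightarrow> nat) \<Rightarrow> bool" where
  "satisfies_perm_id _ k \<tau> \<longleftrightarrow>
     (\<forall>a :: nat \<Rightarrow> 'a. lprod (map a [1..<k+1]) = lprod (map (a \<circ> \<tau>) [1..<k+1]))"

definition Hperm :: "'a::semigroup_mult itself \<Rightarrow> nat \<Rightarrow> (nat \<Rightarrow> nat) set" where
  "Hperm T k = {\<tau>. \<tau> permutes {1..k} \<and> satisfies_perm_id T k \<tau>}"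

inductive_set Sgen :: "nat \<Rightarrow> nat \<Rightarrow> nat \<Rightarrow> (nat \<Rightarrow> nat) set" for m a b where
  id: "id \<in> Sgen m a b"
| first: "\<sigma> permutes {1..a} \<Longrightarrow> \<sigma> \<in> Sgen m a b"
| last: "\<sigma> permutes {m-b+1..m} \<Longrightarrow> \<sigma> \<in> Sgen m a b"
| comp: "\<sigma> \<in> Sgen m a b \<Longrightarrow> \<rho> \<in> Sgen m a b \<Longrightarrow> \<sigma> \<circ> \<rho> \<in> Sgen m a b"
| inv: "\<sigma> \<in> Sgen m a b \<Longrightarrow> inv \<sigma> \<in> Sgen m a b"

end

theory Submission
  imports Defs
begin

(* Let p = inv sigma 1, so p >= 2. Substituting z x_1 for x_1 in the identity shows that a left
   factor z can be moved behind the first p - 1 letters of a word of length n; after regrouping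
   letters, z U V = U z V whenever |U| >= p - 1 and |V| >= n + 1 - p. Moving the first letter of a
   word of length n + 2 out of the way and back, induction on j swaps the letters in positions
   j + 1 and j + 2 for every j < p. The one case this misses (positions 3, 4 with p = 2) comes from
   reading the identity backwards: then x_1 is the second letter of the permuted word, so a product
   ab can be brought to the front followed by n letters. These adjacent transpositions generate all
   permutations of {1..4}. The opposite algebra satisfies the identity for sigma conjugated by the
   reversal i -> n + 1 - i, which moves 1 because sigma n is not n; this gives the last four positions. *)

lemma lprod_Cons: "xs \<noteq> [] \<Longrightarrow> lprod (x # xs) = x * lprod xs"
  by (cases xs) auto

lemma lprod_append: "xs \<noteq> [] \<Longrightarrow> ys \<noteq> [] \<Longrightarrow> lprod (xs @ ys) = lprod xs * lprod ys"
  by (induction xs rule: lprod.induct) (auto simp: lprod_Cons mult.assoc)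

lemma lprod_group:
  assumes "B \<noteq> []"
  shows "lprod (A @ lprod B # C) = lprod (A @ B @ C)"
proof -
  have "lprod (lprod B # C) = lprod (B @ C)"
    using assms by (cases "C = []") (simp_all add: lprod_Cons lprod_append)
  then show ?thesis
    using assms by (cases "A = []") (simp_all add: lprod_append)
qed

lemma lprod_split_mult: "lprod (A @ (x * y) # C) = lprod (A @ x # y # C)"
  using lprod_group[of "[x, y]" A C] by simp

lemma lprod_regroup:
  assumes "1 \<le> k" "k \<le> length U"
  obtains U' where "length U' = k" "\<And>A C. lprod (A @ U' @ C) = lprod (A @ U @ C)"
proof
  let ?j = "length U - k + 1"
  show "length (lprod (take ?j U) # drop ?j U) = k"
    using assms by simp
  have "take ?j U \<noteq> []" using assms by auto
  then have "lprod (A @ (lprod (take ?j U) # drop ?j U) @ C) = lprod (A @ take ?j U @ drop ?j U @ C)"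
    for A C using lprod_group[of "take ?j U" A "drop ?j U @ C"] by simp
  then show "lprod (A @ (lprod (take ?j U) # drop ?j U) @ C) = lprod (A @ U @ C)" for A C
    by (simp only: append_assoc[symmetric] append_take_drop_id)
qed

lemma Hperm_id: "id \<in> Hperm T k"
  by (simp add: Hperm_def satisfies_perm_id_def permutes_id)

lemma Hperm_comp:
  assumes "\<tau> \<in> Hperm T k" "\<rho> \<in> Hperm T k"
  shows "\<tau> \<circ> \<rho> \<in> Hperm T k"
proof -
  have "lprod (map a [1..<k+1]) = lprod (map (a \<circ> (\<tau> \<circ> \<rho>)) [1..<k+1])" for a :: "nat \<Rightarrow> 'a"
    using assms unfolding Hperm_def satisfies_perm_id_def by (simp add: o_assoc)
  with assms show ?thesis
    by (auto simp: Hperm_def satisfies_perm_id_def intro: permutes_compose)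
qed

lemma Hperm_inv:
  assumes "\<tau> \<in> Hperm T k"
  shows "inv \<tau> \<in> Hperm T k"
proof -
  have perm: "\<tau> permutes {1..k}" using assms by (simp add: Hperm_def)
  have "lprod (map (a \<circ> inv \<tau>) [1..<k+1]) = lprod (map (a \<circ> inv \<tau> \<circ> \<tau>) [1..<k+1])" for a :: "nat \<Rightarrow> 'a"
    using assms unfolding Hperm_def satisfies_perm_id_def by blast
  then have "lprod (map (a \<circ> inv \<tau>) [1..<k+1]) = lprod (map a [1..<k+1])" for a :: "nat \<Rightarrow> 'a"
    by (simp only: comp_assoc permutes_inv_o(2)[OF perm] comp_id)
  then show ?thesis
    using perm by (simp add: Hperm_def satisfies_perm_id_def permutes_inv)
qed

lemma transpose_in_Hperm:
  assumes "j + 2 \<le> m"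
    and swap: "\<And>P a b S. length P = j \<Longrightarrow> length S = m - j - 2 \<Longrightarrow>
      lprod (P @ a # b # S) = lprod (P @ b # a # (S :: 'a::semigroup_mult list))"
  shows "transpose (j + 1) (j + 2) \<in> Hperm (T :: 'a itself) m"
proof -
  let ?t = "transpose (j + 1) (j + 2)"
  have "lprod (map x [1..<m+1]) = lprod (map (x \<circ> ?t) [1..<m+1])" for x :: "nat \<Rightarrow> 'a"
  proof -
    have "[1..<m+1] = [1..<j+1] @ [j+1..<m+1]"
      using assms(1) upt_add_eq_append[of 1 "j+1" "m-j"] by simp
    also have "[j+1..<m+1] = (j+1) # (j+2) # [j+3..<m+1]"
      using assms(1) by (simp add: upt_conv_Cons eval_nat_numeral)
    finally have split: "[1..<m+1] = [1..<j+1] @ (j+1) # (j+2) # [j+3..<m+1]" .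
    have fixed: "map (x \<circ> ?t) [1..<j+1] = map x [1..<j+1]"
      "map (x \<circ> ?t) [j+3..<m+1] = map x [j+3..<m+1]"
      by auto
    have "lprod (map x [1..<m+1]) = lprod (map x [1..<j+1] @ x (j+1) # x (j+2) # map x [j+3..<m+1])"
      by (simp only: split list.map map_append)
    also have "\<dots> = lprod (map x [1..<j+1] @ x (j+2) # x (j+1) # map x [j+3..<m+1])"
      using assms(1) by (intro swap) auto
    also have "\<dots> = lprod (map (x \<circ> ?t) [1..<m+1])"
      by (simp only: split list.map map_append fixed comp_apply transpose_apply_first transpose_apply_second)
    finally show ?thesis .
  qed
  moreover have "?t permutes {1..m}"
    using assms(1) by (intro permutes_swap_id) auto
  ultimately show ?thesis
    by (simp add: Hperm_def satisfies_perm_id_def)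
qed

lemma adjacent_transpositions_generate_permutes:
  fixes H :: "(nat \<Rightarrow> nat) set"
  assumes id: "id \<in> H" and comp: "\<And>f g. f \<in> H \<Longrightarrow> g \<in> H \<Longrightarrow> f \<circ> g \<in> H"
    and adjacent: "\<And>i. a \<le> i \<Longrightarrow> i < b \<Longrightarrow> transpose i (Suc i) \<in> H"
    and q: "q permutes {a..b}"
  shows "q \<in> H"
proof -
  have far: "transpose i (Suc i + d) \<in> H" if "a \<le> i" "Suc i + d \<le> b" for i d
    using that(2)
  proof (induction d)
    case 0
    then show ?case using adjacent that(1) by simp
  next
    case (Suc d)
    let ?k = "Suc i + d"
    have "transpose ?k (Suc ?k) \<in> H" "transpose i ?k \<in> H"
      using Suc adjacent[of ?k] that(1) by simp_all
    then have "transpose ?k (Suc ?k) \<circ> transpose i ?k \<circ> transpose ?k (Suc ?k) \<in> H"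
      using comp by blast
    also have "transpose ?k (Suc ?k) \<circ> transpose i ?k \<circ> transpose ?k (Suc ?k) = transpose i (Suc ?k)"
      by (auto simp: fun_eq_iff transpose_def)
    finally show ?case by simp
  qed
  have ordered: "transpose i j \<in> H" if "a \<le> i" "i < j" "j \<le> b" for i j
    using far[of i "j - Suc i"] that by simp
  have swaps: "transpose i j \<in> H" if "i \<in> {a..b}" "j \<in> {a..b}" for i j
    using ordered[of i j] ordered[of j i] that id
    by (cases i j rule: linorder_cases) (auto simp: transpose_commute)
  from q finite_atLeastAtMost[of a b] show ?thesis
    by (induction rule: permutes_induct) (use id comp swaps in blast)+
qed

lemma Sgen_subset:
  assumes "id \<in> H" "\<And>f g. f \<in> H \<Longrightarrow> g \<in> H \<Longrightarrow> f \<circ> g \<in> H" "\<And>f. f \<in> H \<Longrightarrow> inv f \<in> H"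
    and "\<And>q. q permutes {1..a} \<Longrightarrow> q \<in> H" "\<And>q. q permutes {m-b+1..m} \<Longrightarrow> q \<in> H"
  shows "Sgen m a b \<subseteq> H"
proof
  show "f \<in> H" if "f \<in> Sgen m a b" for f
    using that by induction (rule assms; assumption)+
qed

section \<open>Reversal and the opposite semigroup\<close>

datatype 'a opp = Opp (unopp: 'a)

instantiation opp :: (semigroup_mult) semigroup_mult
begin
definition times_opp_def: "x * y = Opp (unopp y * unopp x)"
instance by standard (simp add: times_opp_def mult.assoc)
end

lemma lprod_map_Opp: "xs \<noteq> [] \<Longrightarrow> lprod (map Opp xs) = Opp (lprod (rev xs))"
proof (induction xs rule: lprod.induct)
  case (3 x y xs)
  then show ?case
    using lprod_append[of "rev (y # xs)" "[x]"] by (simp add: times_opp_def)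
qed simp_all

definition reflect :: "nat \<Rightarrow> nat \<Rightarrow> nat" where
  "reflect m i = (if i \<in> {1..m} then m + 1 - i else i)"

lemma reflect_reflect [simp]: "reflect m (reflect m i) = i"
  by (auto simp: reflect_def)

lemma reflect_comp_reflect [simp]: "reflect m \<circ> reflect m = id"
  by (simp add: fun_eq_iff)

lemma reflect_image:
  assumes "1 \<le> i" "j \<le> m"
  shows "reflect m ` {i..j} = {m + 1 - j..m + 1 - i}"
proof
  show "{m + 1 - j..m + 1 - i} \<subseteq> reflect m ` {i..j}"
  proof
    fix x assume "x \<in> {m + 1 - j..m + 1 - i}"
    with assms have "m + 1 - x \<in> {i..j}" "x = reflect m (m + 1 - x)"
      by (auto simp: reflect_def)
    then show "x \<in> reflect m ` {i..j}" by blast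
  qed
qed (use assms in \<open>auto simp: reflect_def\<close>)

lemma permutes_conj_involution:
  assumes inv: "\<And>x. r (r x) = x" and q: "q permutes S"
  shows "r \<circ> q \<circ> r permutes r ` S"
proof -
  have "bij r" using inv by (intro o_bij[of r]) (auto simp: fun_eq_iff)
  then have "bij (r \<circ> q \<circ> r)" using permutes_bij[OF q] by (intro bij_comp)
  moreover have "(r \<circ> q \<circ> r) x = x" if "x \<notin> r ` S" for x
  proof -
    have "r x \<notin> S" using that inv by (metis image_eqI)
    then show ?thesis using permutes_not_in[OF q] inv by simp
  qed
  ultimately show ?thesis unfolding permutes_def bij_iff by blast
qed

lemma rev_map_upt_reflect: "rev (map f [1..<m+1]) = map (f \<circ> reflect m) [1..<m+1]"
  by (rule nth_equalityI) (auto simp: rev_nth reflect_def Suc_diff_Suc simp del: upt_Suc)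

lemma satisfies_perm_id_opp_iff:
  assumes "1 \<le> m"
  shows "satisfies_perm_id TYPE('a opp) m (reflect m \<circ> \<tau> \<circ> reflect m)
    \<longleftrightarrow> satisfies_perm_id TYPE('a::semigroup_mult) m \<tau>"
proof -
  let ?r = "reflect m" and ?U = "[1..<m+1]"
  have Opp_lprod: "lprod (map (Opp \<circ> f) ?U) = Opp (lprod (map (f \<circ> ?r) ?U))" for f :: "nat \<Rightarrow> 'a"
    using assms lprod_map_Opp[of "map f ?U"] unfolding rev_map_upt_reflect by (simp del: upt_Suc)
  have Opp_all: "(\<forall>g :: nat \<Rightarrow> 'a opp. P g) \<longleftrightarrow> (\<forall>f. P (Opp \<circ> f))" for P
  proof
    assume "\<forall>f. P (Opp \<circ> f)"
    then have "P (Opp \<circ> (unopp \<circ> g))" for g by blast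
    moreover have "Opp \<circ> (unopp \<circ> g) = g" for g :: "nat \<Rightarrow> 'a opp"
      by (simp add: fun_eq_iff)
    ultimately show "\<forall>g. P g" by simp
  qed simp
  have "satisfies_perm_id TYPE('a opp) m (?r \<circ> \<tau> \<circ> ?r)
      \<longleftrightarrow> (\<forall>f :: nat \<Rightarrow> 'a. lprod (map (Opp \<circ> f) ?U) = lprod (map (Opp \<circ> (f \<circ> ?r \<circ> \<tau> \<circ> ?r)) ?U))"
    unfolding satisfies_perm_id_def Opp_all by (simp only: o_assoc)
  also have "\<dots> \<longleftrightarrow> (\<forall>f :: nat \<Rightarrow> 'a. lprod (map (f \<circ> ?r) ?U) = lprod (map (f \<circ> ?r \<circ> \<tau>) ?U))"
    by (simp only: Opp_lprod opp.inject comp_assoc reflect_comp_reflect comp_id)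
  also have "\<dots> \<longleftrightarrow> satisfies_perm_id TYPE('a) m \<tau>"
    unfolding satisfies_perm_id_def
  proof (intro iffI allI)
    fix h :: "nat \<Rightarrow> 'a"
    assume "\<forall>f :: nat \<Rightarrow> 'a. lprod (map (f \<circ> ?r) ?U) = lprod (map (f \<circ> ?r \<circ> \<tau>) ?U)"
    from this[rule_format, of "h \<circ> ?r"]
    show "lprod (map h ?U) = lprod (map (h \<circ> \<tau>) ?U)"
      by (simp add: comp_assoc)
  qed blast
  finally show ?thesis .
qed

lemma Hperm_opp_iff:
  assumes "1 \<le> m"
  shows "reflect m \<circ> \<tau> \<circ> reflect m \<in> Hperm TYPE('a opp) m \<longleftrightarrow> \<tau> \<in> Hperm TYPE('a::semigroup_mult) m"
proof -
  have conj: "reflect m \<circ> q \<circ> reflect m permutes {1..m}" if "q permutes {1..m}" for q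
    using permutes_conj_involution[where r = "reflect m", OF reflect_reflect that]
      reflect_image[of 1 m m] by simp
  have "reflect m \<circ> (reflect m \<circ> \<tau> \<circ> reflect m) \<circ> reflect m = \<tau>"
    by (simp add: fun_eq_iff)
  then have "reflect m \<circ> \<tau> \<circ> reflect m permutes {1..m} \<longleftrightarrow> \<tau> permutes {1..m}"
    using conj[of \<tau>] conj[of "reflect m \<circ> \<tau> \<circ> reflect m"] by auto
  then show ?thesis
    using satisfies_perm_id_opp_iff[OF assms, of \<tau>, where 'a = 'a] by (simp add: Hperm_def)
qed

section \<open>Identities moving the first letter\<close>

locale moving_first_identity =
  fixes T :: "'a::semigroup_mult itself" and n :: nat and s :: "nat \<Rightarrow> nat"
  assumes perm: "s permutes {1..n}"
    and moves_first: "s 1 \<noteq> 1"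
    and identity: "satisfies_perm_id T n s"
begin

definition first_pos :: nat where
  "first_pos = inv s 1"

lemma first_pos: "s first_pos = 1" "2 \<le> first_pos" "first_pos \<le> n"
proof -
  have "1 \<in> {1..n}"
    using permutes_not_in[OF perm, of 1] moves_first by blast
  then have "first_pos \<in> {1..n}"
    unfolding first_pos_def using permutes_in_image[OF permutes_inv[OF perm]] by blast
  moreover show "s first_pos = 1"
    unfolding first_pos_def using permutes_inverses(1)[OF perm] by simp
  moreover have "first_pos \<noteq> 1"
    using moves_first \<open>s first_pos = 1\<close> by auto
  ultimately show "2 \<le> first_pos" "first_pos \<le> n" by auto
qed

(* If Y is the permuted word x_(s 1) ... x_(s n), then x_1 is its letter at position first_pos
   (counting from 1) and rest Y is x_2 ... x_n. *)
definition rest :: "'a list \<Rightarrow> 'a list" where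
  "rest Y = map (\<lambda>k. Y ! (inv s k - 1)) [2..<n+1]"

lemma length_rest [simp]: "length (rest Y) = n - 1"
  by (simp add: rest_def) arith

lemma lprod_rest:
  assumes "length Y = n"
  shows "lprod Y = lprod (Y ! (first_pos - 1) # rest Y)"
proof -
  let ?x = "\<lambda>k. Y ! (inv s k - 1)"
  have "map (?x \<circ> s) [1..<n+1] = Y"
    using assms by (intro nth_equalityI) (simp_all add: permutes_inverses(2)[OF perm] del: upt_Suc)
  moreover have "map ?x [1..<n+1] = Y ! (first_pos - 1) # rest Y"
    using first_pos upt_conv_Cons[of 1 "n + 1"]
    by (simp add: first_pos_def rest_def numeral_2_eq_2 del: upt_Suc)
  ultimately show ?thesis
    using identity[unfolded satisfies_perm_id_def, rule_format, of ?x] by simp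
qed

lemma rest_update: "rest (Y[first_pos - 1 := w]) = rest Y"
proof -
  have "first_pos - 1 \<noteq> inv s k - 1" if "k \<in> {2..n}" for k
  proof -
    have "inv s k \<in> {1..n}"
      using that permutes_in_image[OF permutes_inv[OF perm]] by auto
    moreover have "inv s k \<noteq> inv s 1"
      using that permutes_inverses(1)[OF perm, of k] permutes_inverses(1)[OF perm, of 1] by auto
    ultimately show ?thesis
      using first_pos(2) unfolding first_pos_def by auto
  qed
  then show ?thesis
    unfolding rest_def by (intro map_cong) (auto simp: nth_list_update_neq)
qed

(* Substitute z x_1 for x_1 in the identity. *)
lemma lprod_insert:
  assumes "length (Y :: 'a list) = n"
  shows "lprod (z # Y) = lprod (take (first_pos - 1) Y @ z # drop (first_pos - 1) Y)"
proof -
  let ?p = "first_pos - 1"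
  let ?w = "Y ! ?p"
  have p: "?p < length Y" using first_pos assms by simp
  then have "Y \<noteq> []" by auto
  have "rest Y \<noteq> []" using first_pos by (simp add: rest_def)
  have "lprod (take ?p Y @ z # drop ?p Y) = lprod (take ?p Y @ z # ?w # drop (Suc ?p) Y)"
    using p by (simp add: Cons_nth_drop_Suc)
  also have "\<dots> = lprod (Y[?p := z * ?w])"
    using p by (simp add: lprod_split_mult upd_conv_take_nth_drop)
  also have "\<dots> = lprod ((z * ?w) # rest Y)"
    using lprod_rest[of "Y[?p := z * ?w]"] rest_update[of Y "z * ?w"] p assms by simp
  also have "\<dots> = z * lprod (?w # rest Y)"
    using \<open>rest Y \<noteq> []\<close> by (simp add: lprod_Cons mult.assoc)
  also have "\<dots> = z * lprod Y"
    using lprod_rest[OF assms] by simp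
  also have "\<dots> = lprod (z # Y)"
    using \<open>Y \<noteq> []\<close> by (simp add: lprod_Cons)
  finally show ?thesis by (rule sym)
qed

lemma lprod_move:
  assumes "first_pos - 1 \<le> length U" "n + 1 - first_pos \<le> length (V :: 'a list)"
  shows "lprod (z # U @ V) = lprod (U @ z # V)"
proof -
  have "1 \<le> first_pos - 1" "1 \<le> n + 1 - first_pos" using first_pos by auto
  obtain U' where U': "length U' = first_pos - 1" "\<And>A C. lprod (A @ U' @ C) = lprod (A @ U @ C)"
    using lprod_regroup[OF \<open>1 \<le> first_pos - 1\<close> assms(1)] by blast
  obtain V' where V': "length V' = n + 1 - first_pos" "\<And>A C. lprod (A @ V' @ C) = lprod (A @ V @ C)"
    using lprod_regroup[OF \<open>1 \<le> n + 1 - first_pos\<close> assms(2)] by blast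
  have "lprod (z # U @ V) = lprod (z # U' @ V')"
    using U'(2)[of "[z]" V] V'(2)[of "z # U'" "[]"] by simp
  also have "\<dots> = lprod (U' @ z # V')"
    using lprod_insert[of "U' @ V'" z] U'(1) V'(1) first_pos by simp
  also have "\<dots> = lprod (U @ z # V)"
    using U'(2)[of "[]" "z # V"] V'(2)[of "U' @ [z]" "[]"] by simp
  finally show ?thesis .
qed

lemma lprod_swap_below:
  assumes "length P < first_pos" "length (V :: 'a list) = n - length P"
  shows "lprod (P @ a # b # V) = lprod (P @ b # a # V)"
  using assms
proof (induction P arbitrary: V)
  case Nil
  let ?k = "first_pos - 1"
  have "lprod (a # b # V) = lprod (a # (b # take ?k V) @ drop ?k V)" by simp
  also have "\<dots> = lprod ((b # take ?k V) @ a # drop ?k V)"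
    by (rule lprod_move) (use Nil.prems first_pos in auto)
  also have "\<dots> = b * lprod (take ?k V @ a # drop ?k V)"
    by (simp add: lprod_Cons)
  also have "\<dots> = b * lprod (a # take ?k V @ drop ?k V)"
    using lprod_move[of "take ?k V" "drop ?k V" a] Nil.prems first_pos by simp
  also have "\<dots> = lprod (b # a # V)"
    by (simp add: lprod_Cons)
  finally show ?case by simp
next
  case (Cons x P)
  let ?k = "first_pos - length P - 2"
  let ?W = "take ?k V @ x # drop ?k V"
  have lengths: "length (take ?k V) = ?k" "length (drop ?k V) = n + 1 - first_pos"
    "length ?W = n - length P"
    using Cons.prems first_pos by auto
  have "lprod (x # P @ a # b # V) = lprod (x # (P @ a # b # take ?k V) @ drop ?k V)"
    by simp
  also have "\<dots> = lprod (P @ a # b # ?W)"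
    by (subst lprod_move) (use lengths Cons.prems in auto)
  also have "\<dots> = lprod (P @ b # a # ?W)"
    by (rule Cons.IH) (use lengths Cons.prems in auto)
  also have "\<dots> = lprod (x # (P @ b # a # take ?k V) @ drop ?k V)"
    by (subst lprod_move) (use lengths Cons.prems in auto)
  finally show ?case by simp
qed

(* Apply the identity to e c (a b) V: since s 2 = 1, it rewrites this word as (a b) followed by n
   letters, where the swap of a and b is available. *)
lemma lprod_swap_third_fourth:
  assumes "first_pos = 2" "length (V :: 'a list) = n - 2"
  shows "lprod (e # c # a # b # V) = lprod (e # c # b # a # V)"
proof -
  let ?Y = "\<lambda>u. (e * c) # u # V"
  let ?R = "rest (?Y (a * b))"
  have len: "length (?Y u) = n" for u
    using assms first_pos by simp
  have rest_Y: "rest (?Y u) = ?R" for u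
  proof -
    have "(?Y (a * b))[first_pos - 1 := u] = ?Y u"
      using assms(1) by simp
    then show ?thesis
      using rest_update[of "?Y (a * b)" u] by (simp only:)
  qed
  have "s 1 \<in> {2..n}"
    using permutes_in_image[OF perm, of 1] moves_first first_pos by auto
  then have idx: "s 1 - 2 < length [2..<n+1]" "[2..<n+1] ! (s 1 - 2) = s 1"
    by (auto simp del: upt_Suc)
  then have "?R ! (s 1 - 2) = ?Y (a * b) ! (inv s (s 1) - 1)"
    unfolding rest_def by (simp only: nth_map)
  also have "\<dots> = e * c"
    using permutes_inverses(2)[OF perm] by simp
  finally have "?R ! (s 1 - 2) = e * c" .
  moreover have "s 1 - 2 < length ?R"
    using idx(1) by (simp only: rest_def length_map)
  ultimately have "e * c \<in> set ?R"
    by (metis nth_mem)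
  then obtain A C where R: "?R = A @ (e * c) # C"
    by (blast dest: split_list)
  have key: "lprod (e # c # u # v # V) = lprod (u # v # A @ e # c # C)" for u v
  proof -
    have "lprod (e # c # u # v # V) = lprod (?Y (u * v))"
      using lprod_split_mult[of "[]" e c "u # v # V"] lprod_split_mult[of "[e * c]" u v V] by simp
    also have "\<dots> = lprod ((u * v) # rest (?Y (u * v)))"
      using lprod_rest[OF len, of "u * v"] assms(1) by (simp del: lprod.simps)
    also have "\<dots> = lprod ((u * v) # ?R)"
      by (simp only: rest_Y[of "u * v"])
    also have "\<dots> = lprod (u # v # A @ e # c # C)"
      using R lprod_split_mult[of "[]" u v "A @ (e * c) # C"] lprod_split_mult[of "u # v # A" e c C] by simp
    finally show ?thesis .
  qed
  have "length (A @ e # c # C) = n"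
    using arg_cong[OF R, of length] first_pos by simp
  then show ?thesis
    using key[of a b] key[of b a] lprod_swap_below[of "[]" "A @ e # c # C" a b] first_pos by simp
qed

lemma lprod_swap_front:
  assumes "length P \<le> 2" "length (V :: 'a list) = n - length P"
  shows "lprod (P @ a # b # V) = lprod (P @ b # a # V)"
proof (cases "length P < first_pos")
  case True
  then show ?thesis using lprod_swap_below assms(2) by blast
next
  case False
  then have "first_pos = 2" "length P = 2"
    using assms(1) first_pos by auto
  then obtain e c where "P = [e, c]"
    by (auto simp: numeral_2_eq_2 length_Suc_conv)
  then show ?thesis
    using lprod_swap_third_fourth \<open>first_pos = 2\<close> assms(2) \<open>length P = 2\<close> by simp
qed

lemma front_block:
  assumes "q permutes {1..4}"
  shows "q \<in> Hperm T (n + 2)"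
proof (rule adjacent_transpositions_generate_permutes[OF Hperm_id Hperm_comp _ assms])
  fix i :: nat
  assume "1 \<le> i" "i < 4"
  then have "transpose ((i - 1) + 1) ((i - 1) + 2) \<in> Hperm T (n + 2)"
    using first_pos by (intro transpose_in_Hperm lprod_swap_front) auto
  then show "transpose i (Suc i) \<in> Hperm T (n + 2)"
    using \<open>1 \<le> i\<close> by simp
qed

end

theorem lemma2p14:
  fixes scale :: "'k::field \<Rightarrow> 'a::ring \<Rightarrow> 'a"
    and n :: nat and \<sigma> :: "nat \<Rightarrow> nat"
  assumes "module scale"
    and "\<And>c x y. scale c (x * y) = scale c x * y"
    and "\<And>c x y. scale c (x * y) = x * scale c y"
    and "\<sigma> permutes {1..n}" and "\<sigma> 1 \<noteq> 1" and "\<sigma> n \<noteq> n"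
    and "satisfies_perm_id TYPE('a) n \<sigma>"
  shows "Sgen (n+2) 4 4 \<subseteq> Hperm TYPE('a) (n+2)"
proof -
  interpret A: moving_first_identity "TYPE('a)" n \<sigma>
    using assms(4,5,7) by unfold_locales
  have "2 \<le> n" using A.first_pos by simp
  let ?\<sigma>' = "reflect n \<circ> \<sigma> \<circ> reflect n"
  have "?\<sigma>' permutes {1..n}"
    using permutes_conj_involution[where r = "reflect n", OF reflect_reflect assms(4)]
      reflect_image[of 1 n n] by simp
  moreover have "?\<sigma>' 1 \<noteq> 1"
    using permutes_in_image[OF assms(4), of n] assms(6) \<open>2 \<le> n\<close> by (auto simp: reflect_def)
  moreover have "satisfies_perm_id TYPE('a opp) n ?\<sigma>'"
    using satisfies_perm_id_opp_iff[of n \<sigma>, where 'a = 'a] assms(7) \<open>2 \<le> n\<close> by simp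
  ultimately interpret Aop: moving_first_identity "TYPE('a opp)" n ?\<sigma>'
    by unfold_locales
  show ?thesis
  proof (rule Sgen_subset[OF Hperm_id Hperm_comp Hperm_inv A.front_block])
    fix q assume "q permutes {n + 2 - 4 + 1..n + 2}"
    then have "reflect (n + 2) \<circ> q \<circ> reflect (n + 2) permutes reflect (n + 2) ` {n + 2 - 4 + 1..n + 2}"
      by (rule permutes_conj_involution[OF reflect_reflect])
    moreover have "reflect (n + 2) ` {n + 2 - 4 + 1..n + 2} = {1..4}"
      using reflect_image[of "n + 2 - 4 + 1" "n + 2" "n + 2"] \<open>2 \<le> n\<close> by simp
    ultimately have "reflect (n + 2) \<circ> q \<circ> reflect (n + 2) permutes {1..4}"
      by simp
    then show "q \<in> Hperm TYPE('a) (n + 2)"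
      using Aop.front_block Hperm_opp_iff[of "n + 2" q, where 'a = 'a] by simp
  qed
qed

end
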